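(* (1) Let $\bar B\in\mathbb F_q[X]^{(\ell+1)\times(\ell+1)}$ represent a basis of $\varphi(M_{s,\ell})$. If $\bar B\,\bar W_\ell$ is in weak Popov form, then one of the rows of $\bar B$ corresponds to a polynomial in $\varphi(M_{s,\ell})$ of minimal $(1,-1)$-weighted degree among its nonzero elements. (2) If $\bar B^{(0)},\dots,\bar B^{(\ell)}\in\mathbb F_q[X,Y]$ is a basis of $\varphi(M_{s,\ell})$, then $\bar B^{(0)},\dots,\bar B^{(\ell)},\,(L(X)Y)^{\ell-s+1}(Y-\bar R(X))^s$ is a basis of $\varphi(M_{s,\ell+1})$, and $\bar G(X)^{s+1},\,\bar B^{(0)}(Y-\bar R(X)),\dots,\bar B^{(\ell)}(Y-\bar R(X))$ is a basis of $\varphi(M_{s+1,\ell+1})$, where in each case $\varphi$ is the map for the corresponding parameters.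
   Context: Let $\mathbb F_q$ be a finite field, $1\le k<n<q$, $\alpha_0,\dots,\alpha_{n-1}$ distinct nonzero elements of $\mathbb F_q$, $w_0,\dots,w_{n-1}$ nonzero elements of $\mathbb F_q$, and $r\in\mathbb F_q^n$ with $r_i=0$ for $i=0,\dots,k-1$; $r_i'=r_i/w_i$. Let $G=\prod_{i=0}^{n-1}(X-\alpha_i)$, $R$ the unique polynomial of degree $<n$ with $R(\alpha_i)=r_i'$, $L=\prod_{i=0}^{k-1}(X-\alpha_i)$, $\bar G=G/L$, $\bar R=R/L$. For positive integers $s\le\ell$, $M_{s,\ell}$ is the $\mathbb F_q[X]$-module of all $Q\in\mathbb F_q[X,Y]$ of $Y$-degree at most $\ell$ such that for each $i$, $Q(X+\alpha_i,Y+r_i')$ has no monomials of total degree less than $s$; $\varphi(Q)=L(X)^{-s}Q(X,L(X)Y)$ (a polynomial) and $\varphi(M_{s,\ell})$ is its image. The $(1,-1)$-weighted degree of a nonzero bivariate polynomial is the maximum of $i-j$ over its monomials $X^iY^j$. A polynomial $\sum_tQ_t(X)Y^t$ has coefficient vector $(Q_0,Q_1,\dots)$; a matrix represents a basis if its rows are the coefficient vectors of the basis elements. $\bar W_\ell=\mathrm{diag}(X^\ell,X^{\ell-1},\dots,X,1)$. For $v\in\mathbb F_q[X]^m$, $\deg v=\max_i\deg v_i$ and $\mathrm{LP}(v)=\max\{i:\deg v_i=\deg v\}$; a matrix is in weak Popov form if its rows have pairwise different leading positions. *)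

theory Defs
  imports "HOL-Computational_Algebra.Polynomial"
begin

text \<open>Bivariate polynomials Q(X,Y) are represented as elements of type 'a poly poly:
  the outer variable is Y, the coefficient of Y^t is the univariate polynomial Q_t(X).
  So the coefficient of X^i Y^j in Q is coeff (coeff Q j) i.\<close>

definition vanish_poly :: "(nat \<Rightarrow> 'a::comm_ring_1) \<Rightarrow> nat \<Rightarrow> 'a poly" where
  "vanish_poly \<alpha> m = (\<Prod>i<m. [:- \<alpha> i, 1:])"

definition interp_poly :: "(nat \<Rightarrow> 'a::field) \<Rightarrow> (nat \<Rightarrow> 'a) \<Rightarrow> nat \<Rightarrow> 'a poly" where
  "interp_poly \<alpha> rr n = (THE R. degree R < n \<and> (\<forall>i<n. poly R (\<alpha> i) = rr i))"

text \<open>Q(X + a, Y + b).\<close>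
definition shift_XY :: "'a::comm_ring_1 \<Rightarrow> 'a \<Rightarrow> 'a poly poly \<Rightarrow> 'a poly poly" where
  "shift_XY a b Q = map_poly (\<lambda>c. c \<circ>\<^sub>p [:a, 1:]) (Q \<circ>\<^sub>p [:[:b:], 1:])"

definition Mset :: "(nat \<Rightarrow> 'a::comm_ring_1) \<Rightarrow> (nat \<Rightarrow> 'a) \<Rightarrow> nat \<Rightarrow> nat \<Rightarrow> nat \<Rightarrow> 'a poly poly set" where
  "Mset \<alpha> rr n s l = {Q. degree Q \<le> l \<and>
      (\<forall>i<n. \<forall>a b. a + b < s \<longrightarrow> coeff (coeff (shift_XY (\<alpha> i) (rr i) Q) b) a = 0)}"

text \<open>phi(Q) = L(X)^(-s) Q(X, L(X) Y).\<close>
definition phi :: "'a::field poly \<Rightarrow> nat \<Rightarrow> 'a poly poly \<Rightarrow> 'a poly poly" where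
  "phi L s Q = map_poly (\<lambda>c. c div L ^ s) (Q \<circ>\<^sub>p [:0, L:])"

definition wdeg :: "'a::zero poly poly \<Rightarrow> int" where
  "wdeg Q = Max {int i - int j | i j. coeff (coeff Q j) i \<noteq> 0}"

definition mod_span :: "'a::comm_ring_1 poly poly list \<Rightarrow> 'a poly poly set" where
  "mod_span bs = {(\<Sum>i<length bs. smult (c i) (bs ! i)) | c. True}"

definition mod_indep :: "'a::comm_ring_1 poly poly list \<Rightarrow> bool" where
  "mod_indep bs \<longleftrightarrow> (\<forall>c. (\<Sum>i<length bs. smult (c i) (bs ! i)) = 0 \<longrightarrow> (\<forall>i<length bs. c i = 0))"

definition is_mod_basis :: "'a::comm_ring_1 poly poly list \<Rightarrow> 'a poly poly set \<Rightarrow> bool" where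
  "is_mod_basis bs S \<longleftrightarrow> mod_indep bs \<and> mod_span bs = S"

text \<open>Vectors in F[X]^m are functions nat => 'a poly restricted to indices < m.
  deg v is the maximal degree of a nonzero entry (zero entries have degree -infinity),
  LP v is the largest index attaining it.\<close>
definition vdeg :: "(nat \<Rightarrow> 'a::zero poly) \<Rightarrow> nat \<Rightarrow> nat" where
  "vdeg v m = Max {degree (v i) | i. i < m \<and> v i \<noteq> 0}"

definition LP :: "(nat \<Rightarrow> 'a::zero poly) \<Rightarrow> nat \<Rightarrow> nat" where
  "LP v m = Max {i. i < m \<and> v i \<noteq> 0 \<and> degree (v i) = vdeg v m}"

definition weak_popov :: "(nat \<Rightarrow> nat \<Rightarrow> 'a::zero poly) \<Rightarrow> nat \<Rightarrow> nat \<Rightarrow> bool" where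
  "weak_popov A nr nc \<longleftrightarrow> (\<forall>i<nr. \<forall>j<nr. i \<noteq> j \<longrightarrow> LP (A i) nc \<noteq> LP (A j) nc)"

text \<open>The matrix whose rows are the coefficient vectors of bs, multiplied on the right by
  W_l = diag(X^l, ..., X, 1): entry (i,j) is coeff (bs!i) j * X^(l-j).\<close>
definition BW :: "'a::comm_semiring_1 poly poly list \<Rightarrow> nat \<Rightarrow> nat \<Rightarrow> nat \<Rightarrow> 'a poly" where
  "BW bs l i j = coeff (bs ! i) j * monom 1 (l - j)"

end

theory Submission
  imports Defs
begin

text \<open>
  Part (1) is the predictable-degree property of weak Popov forms. Multiplying by \<open>W\<close> turns
  the \<open>(1,-1)\<close>-weighted degree of \<open>Q\<close> into the degree of its coefficient row vector minus \<open>l\<close>.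
  If the rows \<open>b\<^sub>i\<close> have pairwise distinct leading positions, then in a combination
  \<open>\<Sum> c\<^sub>i b\<^sub>i\<close> the top-degree terms competing in the largest leading position come from a
  single row and cannot cancel, so the combination has weighted degree at least that of
  every \<open>b\<^sub>i\<close> with \<open>c\<^sub>i \<noteq> 0\<close>.

  For (2) one substitutes \<open>Y \<mapsto> Y + R(X)\<close>: the interpolation conditions defining \<open>M s l\<close>
  say exactly that \<open>Q(X, Y + R(X))\<close> lies in the ideal \<open>(G(X), Y)\<^sup>s\<close>, and at the first \<open>k\<close>
  points, where \<open>R\<close> vanishes, that \<open>Q(X, Y)\<close> lies in \<open>(L(X), Y)\<^sup>s\<close>, which makes \<open>\<phi>\<close> an
  injective \<open>F[X]\<close>-linear map on \<open>M s l\<close>. In the shifted coordinates, peeling off the top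
  \<open>Y\<close>-coefficient gives \<open>M s (l+1) = M s l \<oplus> F[X] Y\<^sup>l\<^sup>-\<^sup>s\<^sup>+\<^sup>1 (Y - R)\<^sup>s\<close>, and splitting off the
  \<open>Y\<close>-free part gives \<open>M (s+1) (l+1) = F[X] G\<^sup>s\<^sup>+\<^sup>1 + M s l \<cdot> (Y - R)\<close>. Applying \<open>\<phi>\<close> yields
  the two bases; independence follows from the \<open>Y\<close>-degree and from evaluation at
  \<open>Y = R / L\<close> respectively.
\<close>

section \<open>Powers of the ideal generated by \<open>g(X)\<close> and \<open>Y\<close>\<close>

(* P(X,Y) lies in the ideal \<langle>g(X), Y\<rangle>^s *)
definition pow_dvd_coeffs :: "'a::comm_ring_1 poly \<Rightarrow> nat \<Rightarrow> 'a poly poly \<Rightarrow> bool" where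
  "pow_dvd_coeffs g s P \<longleftrightarrow> (\<forall>j. g ^ (s - j) dvd coeff P j)"

lemma pow_dvd_coeffs_0_exp [simp]: "pow_dvd_coeffs g 0 P"
  by (simp add: pow_dvd_coeffs_def)

lemma pow_dvd_coeffs_0 [simp]: "pow_dvd_coeffs g s 0"
  by (simp add: pow_dvd_coeffs_def)

lemma pow_dvd_coeffs_mono: "pow_dvd_coeffs g s P \<Longrightarrow> t \<le> s \<Longrightarrow> pow_dvd_coeffs g t P"
  unfolding pow_dvd_coeffs_def by (meson diff_le_mono dvd_trans le_imp_power_dvd)

lemma pow_dvd_coeffs_add:
  "pow_dvd_coeffs g s P \<Longrightarrow> pow_dvd_coeffs g s Q \<Longrightarrow> pow_dvd_coeffs g s (P + Q)"
  by (simp add: pow_dvd_coeffs_def)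

lemma pow_dvd_coeffs_diff:
  "pow_dvd_coeffs g s P \<Longrightarrow> pow_dvd_coeffs g s Q \<Longrightarrow> pow_dvd_coeffs g s (P - Q)"
  by (simp add: pow_dvd_coeffs_def dvd_diff)

lemma pow_dvd_coeffs_smult: "pow_dvd_coeffs g s P \<Longrightarrow> pow_dvd_coeffs g s (smult c P)"
  by (simp add: pow_dvd_coeffs_def)

lemma pow_dvd_coeffs_pCons:
  "pow_dvd_coeffs g s (pCons a P) \<longleftrightarrow> g ^ s dvd a \<and> pow_dvd_coeffs g (s - 1) P"
  unfolding pow_dvd_coeffs_def
proof safe
  fix j
  assume "\<forall>j. g ^ (s - j) dvd coeff (pCons a P) j"
  from this[rule_format, of 0] this[rule_format, of "Suc j"]
  show "g ^ s dvd a" and "g ^ (s - 1 - j) dvd coeff P j" by simp_all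
next
  fix j
  assume "g ^ s dvd a" and "\<forall>j. g ^ (s - 1 - j) dvd coeff P j"
  then show "g ^ (s - j) dvd coeff (pCons a P) j" by (cases j) auto
qed

lemma pow_dvd_coeffs_smult_dvd:
  assumes "g ^ s dvd a" and "pow_dvd_coeffs g t Q"
  shows "pow_dvd_coeffs g (s + t) (smult a Q)"
  unfolding pow_dvd_coeffs_def
proof
  fix j
  have "g ^ (s + t - j) dvd g ^ s * g ^ (t - j)"
    by (simp add: le_imp_power_dvd flip: power_add)
  also have "\<dots> dvd a * coeff Q j"
    using assms by (intro mult_dvd_mono) (auto simp: pow_dvd_coeffs_def)
  finally show "g ^ (s + t - j) dvd coeff (smult a Q) j" by simp
qed

lemma pow_dvd_coeffs_mult:
  "pow_dvd_coeffs g s P \<Longrightarrow> pow_dvd_coeffs g t Q \<Longrightarrow> pow_dvd_coeffs g (s + t) (P * Q)"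
proof (induct P arbitrary: s rule: pCons_induct)
  case (pCons a P)
  from pCons.prems(1) have a: "g ^ s dvd a" and P: "pow_dvd_coeffs g (s - 1) P"
    by (simp_all add: pow_dvd_coeffs_pCons)
  have "pow_dvd_coeffs g (s + t - 1) (P * Q)"
    using pCons.hyps(2)[OF P pCons.prems(2)] by (rule pow_dvd_coeffs_mono) simp
  then have "pow_dvd_coeffs g (s + t) (pCons 0 (P * Q))" by (simp add: pow_dvd_coeffs_pCons)
  with pow_dvd_coeffs_smult_dvd[OF a pCons.prems(2)] show ?case
    using pow_dvd_coeffs_add by fastforce
qed simp

lemma pow_dvd_coeffs_Y: "pow_dvd_coeffs g 1 [:0, 1:]"
  by (simp add: pow_dvd_coeffs_pCons)

lemma pow_dvd_coeffs_Y_power: "pow_dvd_coeffs g s ([:0, 1:] ^ s)"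
  by (induct s) (use pow_dvd_coeffs_mult[OF pow_dvd_coeffs_Y] in auto)

lemma pow_dvd_coeffs_const: "g ^ s dvd a \<Longrightarrow> pow_dvd_coeffs g s [:a:]"
  by (simp add: pow_dvd_coeffs_pCons)

lemma pow_dvd_coeffs_pcompose_shift:
  "g dvd D \<Longrightarrow> pow_dvd_coeffs g s P \<Longrightarrow> pow_dvd_coeffs g s (P \<circ>\<^sub>p [:D, 1:])"
proof (induct P arbitrary: s rule: pCons_induct)
  case (pCons a P)
  from pCons.prems(2) have a: "g ^ s dvd a" and P: "pow_dvd_coeffs g (s - 1) P"
    by (simp_all add: pow_dvd_coeffs_pCons)
  show ?case
  proof (cases s)
    case (Suc s')
    have "pow_dvd_coeffs g 1 [:D, 1:]" using pCons.prems(1) by (simp add: pow_dvd_coeffs_pCons)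
    from pow_dvd_coeffs_mult[OF this pCons.hyps(2)[OF pCons.prems(1) P]] Suc
    have "pow_dvd_coeffs g s ([:D, 1:] * (P \<circ>\<^sub>p [:D, 1:]))" by simp
    then show ?thesis
      using pow_dvd_coeffs_add[OF pow_dvd_coeffs_const[OF a]] by (simp add: pcompose_pCons)
  qed simp
qed simp

lemma pow_dvd_coeffs_pcompose_shift_iff:
  assumes "g dvd D"
  shows "pow_dvd_coeffs g s (P \<circ>\<^sub>p [:D, 1:]) \<longleftrightarrow> pow_dvd_coeffs g s P"
proof
  have "P = (P \<circ>\<^sub>p [:D, 1:]) \<circ>\<^sub>p [:- D, 1:]"
    by (simp add: pcompose_pCons flip: pcompose_assoc)
  moreover have "g dvd - D" using assms by simp
  ultimately show "pow_dvd_coeffs g s (P \<circ>\<^sub>p [:D, 1:]) \<Longrightarrow> pow_dvd_coeffs g s P"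
    by (metis pow_dvd_coeffs_pcompose_shift)
qed (rule pow_dvd_coeffs_pcompose_shift[OF assms])

lemma pow_dvd_coeffs_X_iff:
  "pow_dvd_coeffs [:0, 1:] s P \<longleftrightarrow> (\<forall>x y. x + y < s \<longrightarrow> coeff (coeff P y) x = 0)"
  unfolding pow_dvd_coeffs_def monom_altdef[of 1, simplified, symmetric] monom_1_dvd_iff'
  by auto

definition shift_X :: "'a::comm_ring_1 \<Rightarrow> 'a poly poly \<Rightarrow> 'a poly poly" where
  "shift_X a P = map_poly (\<lambda>c. c \<circ>\<^sub>p [:a, 1:]) P"

lemma shift_X_0 [simp]: "shift_X a 0 = 0"
  by (simp add: shift_X_def)

lemma coeff_shift_X: "coeff (shift_X a P) j = coeff P j \<circ>\<^sub>p [:a, 1:]"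
  by (simp add: shift_X_def coeff_map_poly)

lemma shift_X_add: "shift_X a (P + Q) = shift_X a P + shift_X a Q"
  by (rule poly_eqI) (simp add: coeff_shift_X pcompose_add)

lemma shift_X_smult: "shift_X a (smult c P) = smult (c \<circ>\<^sub>p [:a, 1:]) (shift_X a P)"
  by (rule poly_eqI) (simp add: coeff_shift_X pcompose_mult)

lemma shift_X_pCons: "shift_X a (pCons c P) = pCons (c \<circ>\<^sub>p [:a, 1:]) (shift_X a P)"
  by (rule poly_eqI) (simp add: coeff_shift_X coeff_pCons split: nat.split)

lemma shift_X_mult: "shift_X a (P * Q) = shift_X a P * shift_X a Q"
  by (induct P rule: pCons_induct)
    (simp_all add: shift_X_add shift_X_smult shift_X_pCons)

lemma shift_X_pcompose: "shift_X a (P \<circ>\<^sub>p Q) = shift_X a P \<circ>\<^sub>p shift_X a Q"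
  by (induct P rule: pCons_induct)
    (simp_all add: pcompose_pCons shift_X_add shift_X_mult shift_X_pCons)

lemma pcompose_power: "(p ^ m) \<circ>\<^sub>p q = (p \<circ>\<^sub>p q) ^ m"
  by (induct m) (simp_all add: pcompose_mult pcompose_1)

lemma linear_power_dvd_iff_pcompose:
  fixes c :: "'a::comm_ring_1 poly"
  shows "[:- a, 1:] ^ m dvd c \<longleftrightarrow> [:0, 1:] ^ m dvd c \<circ>\<^sub>p [:a, 1:]"
proof
  assume "[:- a, 1:] ^ m dvd c"
  then obtain d where "c = [:- a, 1:] ^ m * d" by (elim dvdE)
  then have "c \<circ>\<^sub>p [:a, 1:] = [:0, 1:] ^ m * (d \<circ>\<^sub>p [:a, 1:])"
    by (simp add: pcompose_mult pcompose_power pcompose_pCons)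
  then show "[:0, 1:] ^ m dvd c \<circ>\<^sub>p [:a, 1:]" by simp
next
  assume "[:0, 1:] ^ m dvd c \<circ>\<^sub>p [:a, 1:]"
  then obtain d where d: "c \<circ>\<^sub>p [:a, 1:] = [:0, 1:] ^ m * d" by (elim dvdE)
  have "c = (c \<circ>\<^sub>p [:a, 1:]) \<circ>\<^sub>p [:- a, 1:]"
    by (simp add: pcompose_pCons flip: pcompose_assoc)
  also have "\<dots> = [:- a, 1:] ^ m * (d \<circ>\<^sub>p [:- a, 1:])"
    by (simp add: d pcompose_mult pcompose_power pcompose_pCons)
  finally show "[:- a, 1:] ^ m dvd c" by (metis dvd_triv_left)
qed

lemma pow_dvd_coeffs_shift_X_iff:
  "pow_dvd_coeffs [:0, 1:] s (shift_X a P) \<longleftrightarrow> pow_dvd_coeffs [:- a, 1:] s P"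
  unfolding pow_dvd_coeffs_def coeff_shift_X linear_power_dvd_iff_pcompose ..

lemma shift_XY_low_coeffs_iff:
  fixes Q :: "'a::comm_ring_1 poly poly"
  assumes "poly B a = b"
  shows "(\<forall>x y. x + y < s \<longrightarrow> coeff (coeff (shift_XY a b Q) y) x = 0)
     \<longleftrightarrow> pow_dvd_coeffs [:- a, 1:] s (Q \<circ>\<^sub>p [:B, 1:])"
proof -
  (* both sides only differ by the substitution Y \<mapsto> Y + D with X | D, which preserves (X, Y)^s *)
  define D where "D = (B - [:b:]) \<circ>\<^sub>p [:a, 1:]"
  have "[:0, 1:] dvd D"
    using assms by (simp add: D_def dvd_iff_poly_eq_0 poly_pcompose)
  have "Q \<circ>\<^sub>p [:B, 1:] = (Q \<circ>\<^sub>p [:[:b:], 1:]) \<circ>\<^sub>p [:B - [:b:], 1:]"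
    by (simp add: pcompose_pCons flip: pcompose_assoc)
  then have "shift_X a (Q \<circ>\<^sub>p [:B, 1:]) = shift_X a (Q \<circ>\<^sub>p [:[:b:], 1:]) \<circ>\<^sub>p [:D, 1:]"
    by (simp add: shift_X_pcompose shift_X_pCons D_def pcompose_1)
  also have "shift_X a (Q \<circ>\<^sub>p [:[:b:], 1:]) = shift_XY a b Q"
    by (simp add: shift_X_def shift_XY_def)
  finally have "shift_X a (Q \<circ>\<^sub>p [:B, 1:]) = shift_XY a b Q \<circ>\<^sub>p [:D, 1:]" .
  then show ?thesis
    using pow_dvd_coeffs_pcompose_shift_iff[OF \<open>[:0, 1:] dvd D\<close>]
    by (simp add: pow_dvd_coeffs_X_iff flip: pow_dvd_coeffs_shift_X_iff)
qed

lemma vanish_poly_Suc: "vanish_poly \<alpha> (Suc m) = vanish_poly \<alpha> m * [:- \<alpha> m, 1:]"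
  by (simp add: vanish_poly_def)

lemma vanish_poly_neq_0: "vanish_poly (\<alpha> :: nat \<Rightarrow> 'a::field) m \<noteq> 0"
  by (simp add: vanish_poly_def)

lemma degree_vanish_poly: "degree (vanish_poly (\<alpha> :: nat \<Rightarrow> 'a::field) m) = m"
  unfolding vanish_poly_def by (subst degree_prod_sum_eq) auto

lemma poly_vanish_poly_eq_0: "i < m \<Longrightarrow> poly (vanish_poly (\<alpha> :: nat \<Rightarrow> 'a::field) m) (\<alpha> i) = 0"
  unfolding vanish_poly_def poly_prod by (rule prod_zero) auto

lemma poly_vanish_poly_neq_0:
  assumes "inj_on \<alpha> {..<Suc m}"
  shows "poly (vanish_poly (\<alpha> :: nat \<Rightarrow> 'a::field) m) (\<alpha> m) \<noteq> 0"
  using inj_onD[OF assms] by (force simp: vanish_poly_def poly_prod)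

lemma vanish_poly_power_dvd_iff:
  fixes \<alpha> :: "nat \<Rightarrow> 'a::field"
  assumes "inj_on \<alpha> {..<m}"
  shows "(\<forall>i<m. [:- \<alpha> i, 1:] ^ e dvd c) \<longleftrightarrow> vanish_poly \<alpha> m ^ e dvd c"
proof
  have "[:- \<alpha> i, 1:] dvd vanish_poly \<alpha> m" if "i < m" for i
    unfolding vanish_poly_def using that by (intro dvd_prodI) auto
  then show "vanish_poly \<alpha> m ^ e dvd c \<Longrightarrow> \<forall>i<m. [:- \<alpha> i, 1:] ^ e dvd c"
    by (meson dvd_power_same dvd_trans)
next
  show "\<forall>i<m. [:- \<alpha> i, 1:] ^ e dvd c \<Longrightarrow> vanish_poly \<alpha> m ^ e dvd c"
    using assms
  proof (induct m arbitrary: c)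
    case (Suc m)
    have "inj_on \<alpha> {..<m}" using Suc.prems(2) by (rule inj_on_subset) auto
    with Suc have "vanish_poly \<alpha> m ^ e dvd c" by simp
    then obtain d where d: "c = vanish_poly \<alpha> m ^ e * d" by (elim dvdE)
    show ?case
    proof (cases "c = 0")
      case False
      have "poly (vanish_poly \<alpha> m ^ e) (\<alpha> m) \<noteq> 0"
        using poly_vanish_poly_neq_0[OF Suc.prems(2)] by (simp add: poly_power)
      then have "order (\<alpha> m) (vanish_poly \<alpha> m ^ e) = 0" by (rule order_0I)
      then have "order (\<alpha> m) c = order (\<alpha> m) d" using False by (simp add: d order_mult)
      moreover have "e \<le> order (\<alpha> m) c" using Suc.prems(1) False by (simp add: order_divides)
      ultimately obtain d' where "d = [:- \<alpha> m, 1:] ^ e * d'"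
        using False d by (metis dvdE mult_zero_right order_divides)
      then have "c = (vanish_poly \<alpha> m * [:- \<alpha> m, 1:]) ^ e * d'"
        by (simp only: d power_mult_distrib mult.assoc)
      then show ?thesis unfolding vanish_poly_Suc by (rule dvdI)
    qed simp
  qed (simp add: vanish_poly_def)
qed

lemma pow_dvd_coeffs_vanish_poly_iff:
  fixes \<alpha> :: "nat \<Rightarrow> 'a::field"
  assumes "inj_on \<alpha> {..<m}"
  shows "(\<forall>i<m. pow_dvd_coeffs [:- \<alpha> i, 1:] s P) \<longleftrightarrow> pow_dvd_coeffs (vanish_poly \<alpha> m) s P"
  using vanish_poly_power_dvd_iff[OF assms] unfolding pow_dvd_coeffs_def by blast

lemma interp_poly_exists:
  fixes \<alpha> :: "nat \<Rightarrow> 'a::field"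
  assumes "inj_on \<alpha> {..<Suc m}"
  shows "\<exists>R. degree R < Suc m \<and> (\<forall>i<Suc m. poly R (\<alpha> i) = rr i)"
  using assms
proof (induct m)
  case 0
  show ?case by (rule exI[of _ "[:rr 0:]"]) simp
next
  case (Suc m)
  have "inj_on \<alpha> {..<Suc m}" using Suc.prems by (rule inj_on_subset) auto
  with Suc.hyps obtain R where R: "degree R < Suc m" "\<forall>i<Suc m. poly R (\<alpha> i) = rr i"
    by blast
  define V where "V = vanish_poly \<alpha> (Suc m)"
  define c where "c = (rr (Suc m) - poly R (\<alpha> (Suc m))) / poly V (\<alpha> (Suc m))"
  have "poly V (\<alpha> (Suc m)) \<noteq> 0" unfolding V_def by (rule poly_vanish_poly_neq_0[OF Suc.prems])
  then have "poly (R + smult c V) (\<alpha> i) = rr i" if "i < Suc (Suc m)" for i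
    using that R(2) by (cases "i = Suc m") (auto simp: c_def V_def poly_vanish_poly_eq_0)
  moreover have "degree (R + smult c V) < Suc (Suc m)"
    using R(1) degree_smult_le[of c V] degree_add_le[of R "Suc m" "smult c V"]
    by (simp add: V_def degree_vanish_poly)
  ultimately show ?case by blast
qed

lemma interp_poly:
  fixes \<alpha> :: "nat \<Rightarrow> 'a::field"
  assumes "inj_on \<alpha> {..<n}" and "0 < n"
  shows "degree (interp_poly \<alpha> rr n) < n \<and> (\<forall>i<n. poly (interp_poly \<alpha> rr n) (\<alpha> i) = rr i)"
  unfolding interp_poly_def
proof (rule theI')
  obtain m where n: "n = Suc m" using \<open>0 < n\<close> gr0_conv_Suc by blast
  show "\<exists>!R. degree R < n \<and> (\<forall>i<n. poly R (\<alpha> i) = rr i)"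
  proof (rule ex_ex1I)
    show "\<exists>R. degree R < n \<and> (\<forall>i<n. poly R (\<alpha> i) = rr i)"
      using interp_poly_exists assms(1) unfolding n by blast
  next
    fix R1 R2
    assume "degree R1 < n \<and> (\<forall>i<n. poly R1 (\<alpha> i) = rr i)"
      and "degree R2 < n \<and> (\<forall>i<n. poly R2 (\<alpha> i) = rr i)"
    moreover have "card (\<alpha> ` {..<n}) = n" using assms(1) by (simp add: card_image)
    ultimately show "R1 = R2" by (intro poly_eqI_degree[of "\<alpha> ` {..<n}"]) auto
  qed
qed

lemma image_Collect_commute:
  assumes "\<And>x c. x \<in> A \<Longrightarrow> f (g x c) = h (f' x) c"
  shows "f ` {g x c | x c. x \<in> A} = {h y c | y c. y \<in> f' ` A}"
proof (intro equalityI subsetI)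
  fix z
  assume "z \<in> f ` {g x c | x c. x \<in> A}"
  then obtain x c where "x \<in> A" and "z = f (g x c)" by blast
  with assms show "z \<in> {h y c | y c. y \<in> f' ` A}" by blast
next
  fix z
  assume "z \<in> {h y c | y c. y \<in> f' ` A}"
  then obtain x c where "x \<in> A" and "z = h (f' x) c" by blast
  with assms show "z \<in> f ` {g x c | x c. x \<in> A}"
    by (metis (mono_tags, lifting) image_eqI mem_Collect_eq)
qed

lemma mod_span_iff: "x \<in> mod_span bs \<longleftrightarrow> (\<exists>c. x = (\<Sum>i<length bs. smult (c i) (bs ! i)))"
  unfolding mod_span_def by blast

lemma sum_smult_indicator_nth:
  fixes bs :: "'a::comm_ring_1 poly poly list"
  assumes "i < length bs"
  shows "(\<Sum>j<length bs. smult (if j = i then 1 else 0) (bs ! j)) = bs ! i"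
proof -
  have "(\<Sum>j<length bs. smult (if j = i then 1 else 0) (bs ! j))
      = (\<Sum>j<length bs. if j = i then bs ! j else 0)"
    by (rule sum.cong) auto
  then show ?thesis using assms by (simp add: sum.delta)
qed

lemma nth_in_mod_span: "i < length bs \<Longrightarrow> bs ! i \<in> mod_span bs"
  unfolding mod_span_iff using sum_smult_indicator_nth by metis

lemma mod_indep_nth_neq_0:
  assumes "mod_indep bs" and "i < length bs"
  shows "bs ! i \<noteq> 0"
proof
  assume "bs ! i = 0"
  then have "(\<Sum>j<length bs. smult (if j = i then 1 else 0) (bs ! j)) = 0"
    using sum_smult_indicator_nth[OF assms(2)] by simp
  with assms show False unfolding mod_indep_def by fastforce
qed

lemma sum_smult_append:
  "(\<Sum>i<Suc (length bs). smult (c i) ((bs @ [e]) ! i))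
     = (\<Sum>i<length bs. smult (c i) (bs ! i)) + smult (c (length bs)) e"
proof -
  have "(\<Sum>i<length bs. smult (c i) ((bs @ [e]) ! i)) = (\<Sum>i<length bs. smult (c i) (bs ! i))"
    by (rule sum.cong) (simp_all add: nth_append)
  then show ?thesis by simp
qed

lemma mod_span_append: "mod_span (bs @ [e]) = {P + smult c e | P c. P \<in> mod_span bs}"
proof (intro equalityI subsetI)
  fix x
  assume "x \<in> mod_span (bs @ [e])"
  then obtain c where "x = (\<Sum>i<Suc (length bs). smult (c i) ((bs @ [e]) ! i))"
    unfolding mod_span_iff by auto
  then have "x = (\<Sum>i<length bs. smult (c i) (bs ! i)) + smult (c (length bs)) e"
    by (simp only: sum_smult_append)
  then show "x \<in> {P + smult c e | P c. P \<in> mod_span bs}" unfolding mod_span_iff by blast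
next
  fix x
  assume "x \<in> {P + smult c e | P c. P \<in> mod_span bs}"
  then obtain c d where x: "x = (\<Sum>i<length bs. smult (d i) (bs ! i)) + smult c e"
    unfolding mod_span_iff by blast
  have "(\<Sum>i<length bs. smult ((d(length bs := c)) i) (bs ! i)) = (\<Sum>i<length bs. smult (d i) (bs ! i))"
    by (rule sum.cong) simp_all
  then have "x = (\<Sum>i<Suc (length bs). smult ((d(length bs := c)) i) ((bs @ [e]) ! i))"
    by (simp only: sum_smult_append) (simp add: x)
  then show "x \<in> mod_span (bs @ [e])" unfolding mod_span_iff length_append_singleton by blast
qed

lemma mod_indep_append:
  assumes "mod_indep bs" and "\<And>P c. P \<in> mod_span bs \<Longrightarrow> P + smult c e = 0 \<Longrightarrow> c = 0"
  shows "mod_indep (bs @ [e])"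
  unfolding mod_indep_def
proof (intro allI impI)
  fix c i
  assume "(\<Sum>i<length (bs @ [e]). smult (c i) ((bs @ [e]) ! i)) = 0"
  then have sum0: "(\<Sum>i<length bs. smult (c i) (bs ! i)) + smult (c (length bs)) e = 0"
    by (simp only: length_append_singleton sum_smult_append)
  then have last: "c (length bs) = 0" by (intro assms(2)) (auto simp: mod_span_iff)
  with sum0 have "(\<Sum>i<length bs. smult (c i) (bs ! i)) = 0" by simp
  with assms(1) have "\<forall>i<length bs. c i = 0" unfolding mod_indep_def by blast
  moreover assume "i < length (bs @ [e])"
  then have "i < length bs \<or> i = length bs" by auto
  ultimately show "c i = 0" using last by auto
qed

lemma is_mod_basis_append:
  assumes "is_mod_basis bs S" and "S' = {P + smult c e | P c. P \<in> S}"
    and "\<And>P c. P \<in> S \<Longrightarrow> P + smult c e = 0 \<Longrightarrow> c = 0"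
  shows "is_mod_basis (bs @ [e]) S'"
  using assms mod_indep_append[of bs e] mod_span_append[of bs e]
  unfolding is_mod_basis_def by blast

lemma sum_smult_Cons_map_mult:
  "(\<Sum>i<Suc (length bs). smult (c i) ((b # map (\<lambda>x. x * y) bs) ! i))
     = smult (c 0) b + (\<Sum>i<length bs. smult (c (Suc i)) (bs ! i)) * y"
  by (simp add: sum.lessThan_Suc_shift sum_distrib_right mult_smult_left del: sum.lessThan_Suc)

lemma mod_span_Cons_map_mult:
  "mod_span (b # map (\<lambda>x. x * y) bs) = {smult c b + P * y | P c. P \<in> mod_span bs}"
proof (intro equalityI subsetI)
  fix x
  assume "x \<in> mod_span (b # map (\<lambda>x. x * y) bs)"
  then obtain c where "x = (\<Sum>i<Suc (length bs). smult (c i) ((b # map (\<lambda>x. x * y) bs) ! i))"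
    unfolding mod_span_iff by auto
  moreover have "(\<Sum>i<length bs. smult (c (Suc i)) (bs ! i)) \<in> mod_span bs"
    unfolding mod_span_iff by (rule exI[of _ "\<lambda>i. c (Suc i)"]) (rule refl)
  ultimately show "x \<in> {smult c b + P * y | P c. P \<in> mod_span bs}"
    unfolding sum_smult_Cons_map_mult by blast
next
  fix x
  assume "x \<in> {smult c b + P * y | P c. P \<in> mod_span bs}"
  then obtain c d where x: "x = smult c b + (\<Sum>i<length bs. smult (d i) (bs ! i)) * y"
    unfolding mod_span_iff by blast
  have "x = (\<Sum>i<Suc (length bs). smult (case_nat c d i) ((b # map (\<lambda>x. x * y) bs) ! i))"
    unfolding sum_smult_Cons_map_mult x by simp
  then show "x \<in> mod_span (b # map (\<lambda>x. x * y) bs)" unfolding mod_span_iff by auto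
qed

lemma mod_indep_Cons_map_mult:
  assumes "mod_indep bs"
    and "\<And>P c. P \<in> mod_span bs \<Longrightarrow> smult c b + P * y = 0 \<Longrightarrow> c = 0 \<and> P = 0"
  shows "mod_indep (b # map (\<lambda>x. x * y) bs)"
  unfolding mod_indep_def
proof (intro allI impI)
  fix c i
  assume "(\<Sum>i<length (b # map (\<lambda>x. x * y) bs). smult (c i) ((b # map (\<lambda>x. x * y) bs) ! i)) = 0"
  then have "smult (c 0) b + (\<Sum>i<length bs. smult (c (Suc i)) (bs ! i)) * y = 0"
    by (simp only: length_Cons length_map sum_smult_Cons_map_mult)
  then have "c 0 = 0 \<and> (\<Sum>i<length bs. smult (c (Suc i)) (bs ! i)) = 0"
    by (intro assms(2)) (auto simp: mod_span_iff)
  with assms(1)[unfolded mod_indep_def, rule_format, of "\<lambda>i. c (Suc i)"]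
  have "c 0 = 0 \<and> (\<forall>i<length bs. c (Suc i) = 0)" by blast
  then show "i < length (b # map (\<lambda>x. x * y) bs) \<Longrightarrow> c i = 0" by (cases i) auto
qed

lemma is_mod_basis_Cons_map_mult:
  assumes "is_mod_basis bs S" and "S' = {smult c b + P * y | P c. P \<in> S}"
    and "\<And>P c. P \<in> S \<Longrightarrow> smult c b + P * y = 0 \<Longrightarrow> c = 0 \<and> P = 0"
  shows "is_mod_basis (b # map (\<lambda>x. x * y) bs) S'"
  using assms mod_indep_Cons_map_mult[of bs b y] mod_span_Cons_map_mult[of b y bs]
  unfolding is_mod_basis_def by blast

section \<open>Weak Popov form and the weighted degree\<close>

lemma finite_vdeg_set: "finite {degree (v i) | i. i < (m::nat) \<and> v i \<noteq> 0}"
  using finite_image_set[of "\<lambda>i. i < m \<and> v i \<noteq> 0" "\<lambda>i. degree (v i)"] by simp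

lemma vdeg_ge: "i < m \<Longrightarrow> v i \<noteq> 0 \<Longrightarrow> degree (v i) \<le> vdeg v m"
  unfolding vdeg_def by (rule Max_ge[OF finite_vdeg_set]) blast

lemma vdeg_attained:
  assumes "\<exists>i<m. v i \<noteq> 0"
  shows "\<exists>i<m. v i \<noteq> 0 \<and> degree (v i) = vdeg v m"
proof -
  have "vdeg v m \<in> {degree (v i) | i. i < m \<and> v i \<noteq> 0}"
    unfolding vdeg_def using assms by (intro Max_in[OF finite_vdeg_set]) blast
  then show ?thesis by auto
qed

lemma LP_spec:
  assumes "\<exists>i<m. v i \<noteq> 0"
  shows "LP v m < m \<and> v (LP v m) \<noteq> 0 \<and> degree (v (LP v m)) = vdeg v m"
proof -
  have "LP v m \<in> {i. i < m \<and> v i \<noteq> 0 \<and> degree (v i) = vdeg v m}"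
    unfolding LP_def using vdeg_attained[OF assms] by (intro Max_in) auto
  then show ?thesis by auto
qed

lemma LP_ge: "j < m \<Longrightarrow> v j \<noteq> 0 \<Longrightarrow> degree (v j) = vdeg v m \<Longrightarrow> j \<le> LP v m"
  unfolding LP_def by (rule Max_ge) auto

lemma finite_wdeg_set: "finite {int i - int j | i j. coeff (coeff P j) i \<noteq> 0}"
proof (rule finite_subset)
  define N where "N = (\<Sum>j\<le>degree P. degree (coeff P j))"
  show "{int i - int j | i j. coeff (coeff P j) i \<noteq> 0} \<subseteq> {- int (degree P) .. int N}"
  proof
    fix x
    assume "x \<in> {int i - int j | i j. coeff (coeff P j) i \<noteq> 0}"
    then obtain i j where x: "x = int i - int j" and c: "coeff (coeff P j) i \<noteq> 0" by blast
    then have j: "j \<le> degree P" by (metis coeff_0 le_degree)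
    have "i \<le> degree (coeff P j)" using c by (rule le_degree)
    also have "\<dots> \<le> N" unfolding N_def using j by (intro member_le_sum) auto
    finally show "x \<in> {- int (degree P) .. int N}" using x j by auto
  qed
qed simp

lemma vdeg_weighted_coeffs:
  fixes P :: "'a::field poly poly"
  assumes "P \<noteq> 0" and "degree P \<le> l"
  shows "int (vdeg (\<lambda>j. coeff P j * monom 1 (l - j)) (l + 1)) = wdeg P + int l"
proof -
  define v where "v = (\<lambda>j. coeff P j * monom (1::'a) (l - j))"
  define A where "A = {int i - int j | i j. coeff (coeff P j) i \<noteq> 0}"
  have wdeg: "wdeg P = Max A" unfolding wdeg_def A_def ..
  have finite_A: "finite A" unfolding A_def by (rule finite_wdeg_set)
  have v_neq_0: "v j \<noteq> 0 \<longleftrightarrow> coeff P j \<noteq> 0" for j by (simp add: v_def)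
  have degree_v: "coeff P j \<noteq> 0 \<Longrightarrow> degree (v j) = degree (coeff P j) + (l - j)" for j
    by (simp add: v_def degree_mult_eq degree_monom_eq)
  have in_A: "coeff P j \<noteq> 0 \<Longrightarrow> int (degree (coeff P j)) - int j \<in> A" for j
    unfolding A_def by (intro CollectI exI conjI) auto
  have "coeff P (degree P) \<noteq> 0" using assms(1) by simp
  then have "A \<noteq> {}" using in_A by blast
  have "int (vdeg v (l + 1)) \<le> wdeg P + int l"
  proof -
    have "degree P < l + 1 \<and> v (degree P) \<noteq> 0" using assms by (simp add: v_neq_0)
    then obtain j where j: "j < l + 1" "v j \<noteq> 0" "degree (v j) = vdeg v (l + 1)"
      using vdeg_attained[of "l + 1" v] by blast
    then have cj: "coeff P j \<noteq> 0" by (simp add: v_neq_0)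
    have "int (degree (coeff P j)) - int j \<le> Max A"
      using finite_A in_A[OF cj] by (rule Max_ge)
    moreover have "vdeg v (l + 1) = degree (coeff P j) + (l - j)" using j degree_v[OF cj] by simp
    ultimately show ?thesis using wdeg j(1) by (simp add: of_nat_diff)
  qed
  moreover have "wdeg P + int l \<le> int (vdeg v (l + 1))"
  proof -
    have "Max A \<in> A" using finite_A \<open>A \<noteq> {}\<close> by (rule Max_in)
    then obtain i j where ij: "Max A = int i - int j" and c: "coeff (coeff P j) i \<noteq> 0"
      unfolding A_def by blast
    then have cj: "coeff P j \<noteq> 0" by auto
    then have "j \<le> l" using le_degree[OF cj] assms(2) by simp
    moreover have "i \<le> degree (coeff P j)" using c by (rule le_degree)
    moreover have "degree (v j) \<le> vdeg v (l + 1)"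
      using \<open>j \<le> l\<close> cj by (intro vdeg_ge) (auto simp: v_neq_0)
    ultimately show ?thesis using ij wdeg degree_v[OF cj] by simp
  qed
  ultimately show ?thesis unfolding v_def by simp
qed

lemma weak_popov_entry_degree_less:
  fixes r :: "nat \<Rightarrow> nat \<Rightarrow> 'a::field poly"
  assumes wp: "weak_popov r N m" and "i < N" and "j < N" and "i \<noteq> j"
    and row: "\<exists>k<m. r i k \<noteq> 0"
    and le: "degree (c j) + vdeg (r j) m \<le> D"
    and tie: "degree (c j) + vdeg (r j) m = D \<Longrightarrow> LP (r j) m \<le> LP (r i) m"
    and entry: "c j * r j (LP (r i) m) \<noteq> 0"
  shows "degree (c j * r j (LP (r i) m)) < D"
proof -
  let ?pos = "LP (r i) m"
  have "?pos < m" using LP_spec[OF row] by simp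
  have r_neq_0: "r j ?pos \<noteq> 0" and c_neq_0: "c j \<noteq> 0" using entry by auto
  have deg: "degree (c j * r j ?pos) = degree (c j) + degree (r j ?pos)"
    using r_neq_0 c_neq_0 by (simp add: degree_mult_eq)
  have "degree (r j ?pos) \<le> vdeg (r j) m" using \<open>?pos < m\<close> r_neq_0 by (rule vdeg_ge)
  moreover have "degree (r j ?pos) = vdeg (r j) m \<Longrightarrow> degree (c j) + vdeg (r j) m \<noteq> D"
  proof
    assume "degree (r j ?pos) = vdeg (r j) m" and "degree (c j) + vdeg (r j) m = D"
    then have "?pos \<le> LP (r j) m" and "LP (r j) m \<le> ?pos"
      using LP_ge[of ?pos m "r j"] \<open>?pos < m\<close> r_neq_0 tie by simp_all
    with wp assms(2-4) show False unfolding weak_popov_def by (metis le_antisym)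
  qed
  ultimately show ?thesis using le deg by linarith
qed

lemma weak_popov_degree_le:
  fixes r :: "nat \<Rightarrow> nat \<Rightarrow> 'a::field poly" and c :: "nat \<Rightarrow> 'a poly"
  assumes wp: "weak_popov r N m" and rows: "\<And>i. i < N \<Longrightarrow> \<exists>j<m. r i j \<noteq> 0"
    and "i < N" and "c i \<noteq> 0"
  shows "degree (c i) + vdeg (r i) m \<le> vdeg (\<lambda>j. \<Sum>i<N. c i * r i j) m"
proof -
  define d where "d i = degree (c i) + vdeg (r i) m" for i
  define I where "I = {i. i < N \<and> c i \<noteq> 0}"
  define D where "D = Max (d ` I)"
  have "finite I" by (simp add: I_def)
  have D_ge: "d i \<le> D" if "i \<in> I" for i unfolding D_def using \<open>finite I\<close> that by simp
  have "I \<noteq> {}" using assms(3,4) by (auto simp: I_def)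
  then have "D \<in> d ` I" unfolding D_def using \<open>finite I\<close> by simp
  (* among the rows reaching D, the one with the largest leading position dominates its column *)
  define J where "J = {j \<in> I. d j = D}"
  have "finite J" "J \<noteq> {}" using \<open>finite I\<close> \<open>D \<in> d ` I\<close> by (auto simp: J_def)
  then have "Max ((\<lambda>j. LP (r j) m) ` J) \<in> (\<lambda>j. LP (r j) m) ` J" by simp
  then obtain i0 where "i0 \<in> J" and i0_LP: "LP (r i0) m = Max ((\<lambda>j. LP (r j) m) ` J)" by auto
  have i0_max: "LP (r j) m \<le> LP (r i0) m" if "j \<in> I" "d j = D" for j
    using \<open>finite J\<close> that unfolding i0_LP by (simp add: J_def)
  from \<open>i0 \<in> J\<close> have "i0 \<in> I" "d i0 = D" by (auto simp: J_def)
  define pos where "pos = LP (r i0) m"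
  have row_i0: "pos < m \<and> r i0 pos \<noteq> 0 \<and> degree (r i0 pos) = vdeg (r i0) m"
    using LP_spec[OF rows] \<open>i0 \<in> I\<close> by (simp add: pos_def I_def)
  have others: "coeff (c j * r j pos) D = 0" if "j \<in> {..<N} - {i0}" for j
  proof (cases "c j * r j pos = 0")
    case False
    then have "j \<in> I" using that by (auto simp: I_def)
    then have "degree (c j * r j pos) < D"
      unfolding pos_def using that \<open>i0 \<in> I\<close> False D_ge i0_max
      by (intro weak_popov_entry_degree_less[OF wp]) (auto simp: I_def d_def pos_def rows)
    then show ?thesis by (rule coeff_eq_0)
  qed (simp only: coeff_0)
  have "coeff (\<Sum>j<N. c j * r j pos) D = coeff (c i0 * r i0 pos) D"
    using \<open>i0 \<in> I\<close> others by (simp add: I_def coeff_sum sum.remove[of "{..<N}" i0])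
  also have "\<dots> \<noteq> 0"
  proof -
    have "c i0 * r i0 pos \<noteq> 0" "degree (c i0 * r i0 pos) = D"
      using row_i0 \<open>i0 \<in> I\<close> \<open>d i0 = D\<close> by (auto simp: I_def d_def degree_mult_eq)
    then show ?thesis by (metis leading_coeff_0_iff)
  qed
  finally have lead: "coeff (\<Sum>j<N. c j * r j pos) D \<noteq> 0" .
  have "d i \<le> D" using assms(3,4) by (intro D_ge) (simp add: I_def)
  also have "D \<le> degree (\<Sum>j<N. c j * r j pos)" using lead by (rule le_degree)
  also have "\<dots> \<le> vdeg (\<lambda>j. \<Sum>i<N. c i * r i j) m"
    using lead row_i0 by (intro vdeg_ge) auto
  finally show ?thesis by (simp add: d_def)
qed

lemma weak_popov_min_wdeg:
  fixes bs :: "'a::field poly poly list"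
  assumes indep: "mod_indep bs" and wp: "weak_popov (BW bs l) (length bs) (l + 1)"
    and deg: "\<forall>Q\<in>mod_span bs. degree Q \<le> l" and "bs \<noteq> []"
  shows "\<exists>i<length bs. bs ! i \<noteq> 0 \<and> bs ! i \<in> mod_span bs \<and>
           (\<forall>Q\<in>mod_span bs. Q \<noteq> 0 \<longrightarrow> wdeg (bs ! i) \<le> wdeg Q)"
proof -
  let ?N = "length bs"
  have bs_neq_0: "bs ! i \<noteq> 0" if "i < ?N" for i using mod_indep_nth_neq_0[OF indep that] .
  have bs_deg: "degree (bs ! i) \<le> l" if "i < ?N" for i using deg nth_in_mod_span[OF that] by blast
  have row_vdeg: "int (vdeg (BW bs l i) (l + 1)) = wdeg (bs ! i) + int l" if "i < ?N" for i
  proof -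
    have "BW bs l i = (\<lambda>j. coeff (bs ! i) j * monom 1 (l - j))" by (simp add: BW_def fun_eq_iff)
    then show ?thesis using vdeg_weighted_coeffs[OF bs_neq_0[OF that] bs_deg[OF that]] by simp
  qed
  have rows: "\<exists>j<l + 1. BW bs l i j \<noteq> 0" if "i < ?N" for i
  proof -
    have "BW bs l i (degree (bs ! i)) \<noteq> 0" using bs_neq_0[OF that] by (simp add: BW_def)
    with bs_deg[OF that] show ?thesis by (intro exI[of _ "degree (bs ! i)"]) simp
  qed
  have lower_bound: "\<exists>i<?N. wdeg (bs ! i) \<le> wdeg Q" if Q: "Q \<in> mod_span bs" "Q \<noteq> 0" for Q
  proof -
    obtain c where Q_eq: "Q = (\<Sum>i<?N. smult (c i) (bs ! i))" using Q(1) unfolding mod_span_iff ..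
    have "\<exists>i<?N. c i \<noteq> 0"
    proof (rule ccontr)
      assume "\<not> (\<exists>i<?N. c i \<noteq> 0)"
      then have "Q = 0" unfolding Q_eq by simp
      with Q(2) show False ..
    qed
    then obtain i where i: "i < ?N" "c i \<noteq> 0" by blast
    have "(\<lambda>j. \<Sum>i<?N. c i * BW bs l i j) = (\<lambda>j. coeff Q j * monom 1 (l - j))"
      by (simp add: Q_eq BW_def coeff_sum sum_distrib_right mult.assoc)
    then have "vdeg (BW bs l i) (l + 1) \<le> vdeg (\<lambda>j. coeff Q j * monom 1 (l - j)) (l + 1)"
      using weak_popov_degree_le[where c = c, OF wp rows i] by simp
    moreover have "int (vdeg (\<lambda>j. coeff Q j * monom 1 (l - j)) (l + 1)) = wdeg Q + int l"
      using vdeg_weighted_coeffs[OF Q(2)] deg Q(1) by simp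
    ultimately have "wdeg (bs ! i) \<le> wdeg Q" using row_vdeg[OF i(1)] by linarith
    with i(1) show ?thesis by blast
  qed
  define i0 where "i0 = arg_min_on (\<lambda>i. wdeg (bs ! i)) {..<?N}"
  have "{..<?N} \<noteq> {}" using \<open>bs \<noteq> []\<close> by auto
  then have "i0 < ?N" unfolding i0_def using arg_min_if_finite(1)[of "{..<?N}"] by blast
  moreover have i0_min: "wdeg (bs ! i0) \<le> wdeg (bs ! i)" if "i < ?N" for i
    unfolding i0_def using that by (intro arg_min_least) auto
  ultimately show ?thesis
    using bs_neq_0 nth_in_mod_span lower_bound by (meson order_trans)
qed

section \<open>The modules \<open>M\<^sub>s\<^sub>,\<^sub>\<ell>\<close> and their images under \<open>\<phi>\<close>\<close>

lemma phi_eqI: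
  fixes c :: "'a::field poly"
  assumes "c \<noteq> 0" and "Q \<circ>\<^sub>p [:0, c:] = smult (c ^ s) P"
  shows "phi c s Q = P"
  using assms by (intro poly_eqI) (simp add: phi_def coeff_map_poly)

locale reencoding =
  fixes \<alpha> :: "nat \<Rightarrow> 'a::field" and rr :: "nat \<Rightarrow> 'a" and n k :: nat
  assumes inj: "inj_on \<alpha> {..<n}" and k_less_n: "k < n" and rr_zero: "\<forall>i<k. rr i = 0"
begin

abbreviation "G \<equiv> vanish_poly \<alpha> n"
abbreviation "L \<equiv> vanish_poly \<alpha> k"
abbreviation "R \<equiv> interp_poly \<alpha> rr n"
abbreviation "Gb \<equiv> G div L"
abbreviation "Rb \<equiv> R div L"
abbreviation "M s l \<equiv> Mset \<alpha> rr n s l"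

lemma inj_k: "inj_on \<alpha> {..<k}"
  using inj by (rule inj_on_subset) (use k_less_n in auto)

lemma R_interpolates: "degree R < n \<and> (\<forall>i<n. poly R (\<alpha> i) = rr i)"
  using interp_poly[OF inj] k_less_n by simp

lemma L_dvd_R: "L dvd R"
  using vanish_poly_power_dvd_iff[OF inj_k, of 1 R] R_interpolates rr_zero k_less_n
  by (simp add: dvd_iff_poly_eq_0)

lemma L_dvd_G: "L dvd G"
  using vanish_poly_power_dvd_iff[OF inj_k, of 1 G] k_less_n
  by (simp add: dvd_iff_poly_eq_0 poly_vanish_poly_eq_0)

lemma L_neq_0: "L \<noteq> 0"
  by (rule vanish_poly_neq_0)

lemma R_eq: "R = L * Rb"
  using L_dvd_R by simp

lemma G_eq: "G = L * Gb"
  using L_dvd_G by simp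

lemma Gb_neq_0: "Gb \<noteq> 0"
  using G_eq vanish_poly_neq_0[of \<alpha> n] by auto

lemma Mset_iff: "Q \<in> M s l \<longleftrightarrow> degree Q \<le> l \<and> pow_dvd_coeffs G s (Q \<circ>\<^sub>p [:R, 1:])"
  using shift_XY_low_coeffs_iff[of R] R_interpolates
    pow_dvd_coeffs_vanish_poly_iff[OF inj, of s "Q \<circ>\<^sub>p [:R, 1:]"]
  unfolding Mset_def by auto

lemma Mset_pow_dvd_coeffs_L:
  assumes "Q \<in> M s l"
  shows "pow_dvd_coeffs L s Q"
proof -
  have "pow_dvd_coeffs [:- \<alpha> i, 1:] s (Q \<circ>\<^sub>p [:0, 1:])" if "i < k" for i
  proof -
    have "\<forall>x y. x + y < s \<longrightarrow> coeff (coeff (shift_XY (\<alpha> i) (rr i) Q) y) x = 0"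
      using assms that k_less_n unfolding Mset_def by auto
    then show ?thesis using shift_XY_low_coeffs_iff[of 0 "\<alpha> i" "rr i" s Q] rr_zero that by simp
  qed
  then show ?thesis using pow_dvd_coeffs_vanish_poly_iff[OF inj_k] by auto
qed

lemma Mset_pcompose_L:
  assumes "Q \<in> M s l"
  shows "Q \<circ>\<^sub>p [:0, L:] = smult (L ^ s) (phi L s Q)"
proof -
  have "L ^ s dvd coeff (Q \<circ>\<^sub>p [:0, L:]) j" for j
  proof -
    have "L ^ s dvd L ^ j * L ^ (s - j)" by (simp add: le_imp_power_dvd flip: power_add)
    also have "\<dots> dvd L ^ j * coeff Q j"
      using Mset_pow_dvd_coeffs_L[OF assms] by (simp add: pow_dvd_coeffs_def)
    finally show ?thesis by (simp add: coeff_pcompose_linear)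
  qed
  then show ?thesis by (intro poly_eqI) (simp add: phi_def coeff_map_poly)
qed

lemma degree_phi_Mset:
  assumes "Q \<in> M s l"
  shows "degree (phi L s Q) \<le> l"
proof -
  have "degree (phi L s Q) = degree (Q \<circ>\<^sub>p [:0, L:])"
    using Mset_pcompose_L[OF assms] L_neq_0 by simp
  also have "\<dots> = degree Q" using L_neq_0 by (simp add: degree_pcompose)
  finally show ?thesis using assms by (simp add: Mset_iff)
qed

lemma weak_popov_basis_min_wdeg:
  assumes "length bs = l + 1" and "is_mod_basis bs (phi L s ` M s l)"
    and "weak_popov (BW bs l) (l + 1) (l + 1)"
  shows "\<exists>i<l + 1. bs ! i \<noteq> 0 \<and> bs ! i \<in> phi L s ` M s l \<and>
           (\<forall>Q\<in>phi L s ` M s l. Q \<noteq> 0 \<longrightarrow> wdeg (bs ! i) \<le> wdeg Q)"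
proof -
  have "bs \<noteq> []" using assms(1) by auto
  with assms weak_popov_min_wdeg[of bs l] degree_phi_Mset show ?thesis
    unfolding is_mod_basis_def by auto
qed

abbreviation "E s l \<equiv> [:0, 1:] ^ (l - s + 1) * [:- R, 1:] ^ s"
abbreviation "Eb s l \<equiv> [:0, L:] ^ (l - s + 1) * [:- Rb, 1:] ^ s"

lemma pow_dvd_coeffs_E: "pow_dvd_coeffs G s (E s l \<circ>\<^sub>p [:R, 1:])"
proof -
  have "[:0, 1:] \<circ>\<^sub>p [:R, 1:] = [:R, 1:]" "[:- R, 1:] \<circ>\<^sub>p [:R, 1:] = [:0, 1:]"
    by (simp_all add: pcompose_pCons)
  then have "E s l \<circ>\<^sub>p [:R, 1:] = [:R, 1:] ^ (l - s + 1) * [:0, 1:] ^ s"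
    by (simp only: pcompose_mult pcompose_power)
  then show ?thesis using pow_dvd_coeffs_mult[OF _ pow_dvd_coeffs_Y_power, of G 0] by simp
qed

lemma E_pcompose_L: "E s l \<circ>\<^sub>p [:0, L:] = smult (L ^ s) (Eb s l)"
proof -
  have "[:0, 1:] \<circ>\<^sub>p [:0, L:] = [:0, L:]" by (simp add: pcompose_pCons)
  moreover have "[:- R, 1:] \<circ>\<^sub>p [:0, L:] = smult L [:- Rb, 1:]"
    by (subst R_eq) (simp add: pcompose_pCons)
  ultimately show ?thesis
    by (simp only: pcompose_mult pcompose_power smult_power mult_smult_right)
qed

lemma degree_E: "s \<le> l \<Longrightarrow> degree (E s l) = l + 1"
  by (simp add: degree_mult_eq degree_power_eq del: power_Suc)

lemma coeff_E: "s \<le> l \<Longrightarrow> coeff (E s l) (l + 1) = 1"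
  using degree_E[of s l] lead_coeff_mult[of "[:0, 1:] ^ (l - s + 1)" "[:- R, 1:] ^ s"]
  by (simp add: lead_coeff_power del: power_Suc)

lemma coeff_Eb: "s \<le> l \<Longrightarrow> coeff (Eb s l) (l + 1) = L ^ (l - s + 1)"
proof -
  assume "s \<le> l"
  then have "degree (Eb s l) = l + 1"
    using L_neq_0 by (simp add: degree_mult_eq degree_power_eq del: power_Suc)
  then have "coeff (Eb s l) (l + 1) = lead_coeff (Eb s l)" by simp
  also have "\<dots> = L ^ (l - s + 1)"
    using L_neq_0 by (simp add: lead_coeff_mult lead_coeff_power del: power_Suc)
  finally show ?thesis .
qed

lemma Mset_Suc_degree:
  assumes "s \<le> l"
  shows "M s (l + 1) = {Q + smult c (E s l) | Q c. Q \<in> M s l}"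
proof (intro equalityI subsetI)
  fix Q
  assume "Q \<in> M s (l + 1)"
  then have deg: "degree Q \<le> l + 1" and dvd: "pow_dvd_coeffs G s (Q \<circ>\<^sub>p [:R, 1:])"
    by (simp_all add: Mset_iff)
  define Q0 where "Q0 = Q - smult (coeff Q (l + 1)) (E s l)"
  have "degree Q0 \<le> l"
  proof (rule degree_le, intro allI impI)
    fix i assume "l < i"
    then show "coeff Q0 i = 0"
      using degree_E[OF assms] coeff_E[OF assms] deg
      by (cases "i = l + 1") (auto simp: Q0_def coeff_eq_0)
  qed
  moreover have "pow_dvd_coeffs G s (Q0 \<circ>\<^sub>p [:R, 1:])"
    unfolding Q0_def pcompose_diff pcompose_smult
    by (intro pow_dvd_coeffs_diff pow_dvd_coeffs_smult dvd pow_dvd_coeffs_E)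
  ultimately have "Q0 \<in> M s l" by (simp add: Mset_iff)
  then show "Q \<in> {Q + smult c (E s l) | Q c. Q \<in> M s l}" by (force simp: Q0_def)
next
  fix Q'
  assume "Q' \<in> {Q + smult c (E s l) | Q c. Q \<in> M s l}"
  then obtain Q c where Q': "Q' = Q + smult c (E s l)" and "Q \<in> M s l" by blast
  then have deg: "degree Q \<le> l" and dvd: "pow_dvd_coeffs G s (Q \<circ>\<^sub>p [:R, 1:])"
    by (simp_all add: Mset_iff)
  have "degree (smult c (E s l)) \<le> l + 1"
    using degree_E[OF assms] degree_smult_le by metis
  then have "degree Q' \<le> l + 1" unfolding Q' using deg by (intro degree_add_le) auto
  moreover have "pow_dvd_coeffs G s (Q' \<circ>\<^sub>p [:R, 1:])"
    unfolding Q' pcompose_add pcompose_smult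
    by (intro pow_dvd_coeffs_add pow_dvd_coeffs_smult dvd pow_dvd_coeffs_E)
  ultimately show "Q' \<in> M s (l + 1)" by (simp add: Mset_iff)
qed

lemma phi_image_Mset_Suc_degree:
  assumes "s \<le> l"
  shows "phi L s ` M s (l + 1) = {P + smult c (Eb s l) | P c. P \<in> phi L s ` M s l}"
proof -
  have phi_eq: "phi L s (Q + smult c (E s l)) = phi L s Q + smult c (Eb s l)"
    if "Q \<in> M s l" for Q c
    by (rule phi_eqI[OF L_neq_0])
      (simp only: pcompose_add pcompose_smult Mset_pcompose_L[OF that] E_pcompose_L
        smult_add_right smult_smult mult.commute)
  show ?thesis unfolding Mset_Suc_degree[OF assms] by (rule image_Collect_commute) (rule phi_eq)
qed
lemma is_mod_basis_Suc_degree: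
  assumes "s \<le> l" and "is_mod_basis bs (phi L s ` M s l)"
  shows "is_mod_basis (bs @ [Eb s l]) (phi L s ` M s (l + 1))"
proof (rule is_mod_basis_append[OF assms(2) phi_image_Mset_Suc_degree[OF assms(1)]])
  fix P c
  assume "P \<in> phi L s ` M s l" and sum0: "P + smult c (Eb s l) = 0"
  from \<open>P \<in> phi L s ` M s l\<close> have "degree P \<le> l" using degree_phi_Mset by auto
  then have "coeff P (l + 1) = 0" by (simp add: coeff_eq_0)
  then have "coeff (P + smult c (Eb s l)) (l + 1) = c * L ^ (l - s + 1)"
    by (simp only: coeff_add coeff_smult coeff_Eb[OF assms(1)]) simp
  then have "c * L ^ (l - s + 1) = 0" by (simp only: sum0) simp
  then show "c = 0" using L_neq_0 by simp
qed

lemma Mset_Suc_multiplicity: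
  "M (s + 1) (l + 1) = {smult c [:G ^ (s + 1):] + Q * [:- R, 1:] | Q c. Q \<in> M s l}"
proof (intro equalityI subsetI)
  fix Q'
  assume "Q' \<in> M (s + 1) (l + 1)"
  then have deg: "degree Q' \<le> l + 1" and dvd: "pow_dvd_coeffs G (s + 1) (Q' \<circ>\<^sub>p [:R, 1:])"
    by (simp_all add: Mset_iff)
  obtain a P where aP: "Q' \<circ>\<^sub>p [:R, 1:] = pCons a P" by (metis pCons_cases)
  from dvd obtain c where a: "a = G ^ (s + 1) * c" and P: "pow_dvd_coeffs G s P"
    by (auto simp: aP pow_dvd_coeffs_pCons elim: dvdE)
  define Q where "Q = P \<circ>\<^sub>p [:- R, 1:]"
  have "P = Q \<circ>\<^sub>p [:R, 1:]" by (simp add: Q_def pcompose_pCons flip: pcompose_assoc)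
  moreover have "degree P \<le> l"
    using deg arg_cong[OF aP, of degree] by (cases "P = 0") (auto simp: degree_pcompose)
  ultimately have "Q \<in> M s l" using P by (simp add: Mset_iff Q_def degree_pcompose)
  moreover have "Q' = (Q' \<circ>\<^sub>p [:R, 1:]) \<circ>\<^sub>p [:- R, 1:]"
    by (simp add: pcompose_pCons flip: pcompose_assoc)
  then have "Q' = smult c [:G ^ (s + 1):] + Q * [:- R, 1:]"
    by (simp add: aP pcompose_pCons Q_def a mult.commute)
  ultimately show "Q' \<in> {smult c [:G ^ (s + 1):] + Q * [:- R, 1:] | Q c. Q \<in> M s l}" by blast
next
  fix Q'
  assume "Q' \<in> {smult c [:G ^ (s + 1):] + Q * [:- R, 1:] | Q c. Q \<in> M s l}"
  then obtain Q c where Q': "Q' = smult c [:G ^ (s + 1):] + Q * [:- R, 1:]" and "Q \<in> M s l"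
    by blast
  then have deg: "degree Q \<le> l" and dvd: "pow_dvd_coeffs G s (Q \<circ>\<^sub>p [:R, 1:])"
    by (simp_all add: Mset_iff)
  have "degree (Q * [:- R, 1:]) \<le> l + 1" using deg degree_mult_le[of Q "[:- R, 1:]"] by simp
  then have "degree Q' \<le> l + 1" unfolding Q' by (intro degree_add_le) auto
  moreover have "pow_dvd_coeffs G (s + 1) (smult c [:G ^ (s + 1):] + (Q \<circ>\<^sub>p [:R, 1:]) * [:0, 1:])"
    by (intro pow_dvd_coeffs_add pow_dvd_coeffs_smult pow_dvd_coeffs_const
        pow_dvd_coeffs_mult dvd pow_dvd_coeffs_Y) simp
  moreover have "[:- R, 1:] \<circ>\<^sub>p [:R, 1:] = [:0, 1:]" by (simp add: pcompose_pCons)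
  ultimately show "Q' \<in> M (s + 1) (l + 1)"
    unfolding Mset_iff Q' pcompose_add pcompose_smult pcompose_mult pcompose_const by simp
qed

lemma phi_image_Mset_Suc_multiplicity:
  "phi L (s + 1) ` M (s + 1) (l + 1)
     = {smult c [:Gb ^ (s + 1):] + P * [:- Rb, 1:] | P c. P \<in> phi L s ` M s l}"
proof -
  have G_power: "[:G ^ (s + 1):] = smult (L ^ (s + 1)) [:Gb ^ (s + 1):]"
    by (subst G_eq) (simp add: power_mult_distrib)
  have Y_R: "[:- R, 1:] \<circ>\<^sub>p [:0, L:] = smult L [:- Rb, 1:]"
    by (subst R_eq) (simp add: pcompose_pCons)
  have L_power: "L ^ (s + 1) = L ^ s * L" by simp
  have "phi L (s + 1) (smult c [:G ^ (s + 1):] + Q * [:- R, 1:])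
      = smult c [:Gb ^ (s + 1):] + phi L s Q * [:- Rb, 1:]" if "Q \<in> M s l" for Q c
  proof (rule phi_eqI[OF L_neq_0])
    have "smult c (smult (L ^ s * L) g) + smult (L ^ s) P * smult L y
        = smult (L ^ s * L) (smult c g + P * y)" for g P y :: "'a poly poly"
      by (simp add: smult_add_right mult_smult_left mult_smult_right smult_smult ac_simps)
    then show "(smult c [:G ^ (s + 1):] + Q * [:- R, 1:]) \<circ>\<^sub>p [:0, L:]
        = smult (L ^ (s + 1)) (smult c [:Gb ^ (s + 1):] + phi L s Q * [:- Rb, 1:])"
      unfolding pcompose_add pcompose_smult pcompose_mult pcompose_const
        Mset_pcompose_L[OF that] Y_R G_power L_power .
  qed
  then show ?thesis unfolding Mset_Suc_multiplicity
    by (rule image_Collect_commute)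
qed

lemma is_mod_basis_Suc_multiplicity:
  assumes "is_mod_basis bs (phi L s ` M s l)"
  shows "is_mod_basis ([:Gb ^ (s + 1):] # map (\<lambda>b. b * [:- Rb, 1:]) bs)
           (phi L (s + 1) ` M (s + 1) (l + 1))"
proof (rule is_mod_basis_Cons_map_mult[OF assms phi_image_Mset_Suc_multiplicity])
  fix P c
  assume sum0: "smult c [:Gb ^ (s + 1):] + P * [:- Rb, 1:] = 0"
  have "poly (smult c [:Gb ^ (s + 1):] + P * [:- Rb, 1:]) Rb = c * Gb ^ (s + 1)"
    by (simp only: poly_add poly_mult poly_smult) simp
  then have "c * Gb ^ (s + 1) = 0" by (simp only: sum0) simp
  then have "c = 0" using Gb_neq_0 by simp
  with sum0 have "P * [:- Rb, 1:] = 0" by (simp only: smult_0_left add_0_left)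
  then have "P = 0" by (simp only: mult_eq_0_iff) simp
  with \<open>c = 0\<close> show "c = 0 \<and> P = 0" ..
qed

end

theorem lemma13:
  fixes \<alpha> w r :: "nat \<Rightarrow> 'a::{field, finite}"
    and n k s l :: nat
  defines "rr \<equiv> (\<lambda>i. r i / w i)"
  defines "G \<equiv> vanish_poly \<alpha> n"
  defines "R \<equiv> interp_poly \<alpha> rr n"
  defines "L \<equiv> vanish_poly \<alpha> k"
  defines "Gb \<equiv> G div L"
  defines "Rb \<equiv> R div L"
  assumes "1 \<le> k" and "k < n" and "n < card (UNIV :: 'a set)"
    and "inj_on \<alpha> {..<n}" and "\<forall>i<n. \<alpha> i \<noteq> 0" and "\<forall>i<n. w i \<noteq> 0"
    and "\<forall>i<k. r i = 0"
    and "1 \<le> s" and "s \<le> l"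
  shows "(\<forall>bs. length bs = l + 1 \<and> is_mod_basis bs (phi L s ` Mset \<alpha> rr n s l)
              \<and> weak_popov (BW bs l) (l + 1) (l + 1)
            \<longrightarrow> (\<exists>i<l + 1. bs ! i \<noteq> 0 \<and> bs ! i \<in> phi L s ` Mset \<alpha> rr n s l \<and>
                   (\<forall>Q\<in>phi L s ` Mset \<alpha> rr n s l. Q \<noteq> 0 \<longrightarrow> wdeg (bs ! i) \<le> wdeg Q)))
       \<and> (\<forall>bs. length bs = l + 1 \<and> is_mod_basis bs (phi L s ` Mset \<alpha> rr n s l)
            \<longrightarrow> is_mod_basis (bs @ [[:0, L:] ^ (l - s + 1) * [:- Rb, 1:] ^ s])
                   (phi L s ` Mset \<alpha> rr n s (l + 1))
              \<and> is_mod_basis ([:Gb ^ (s + 1):] # map (\<lambda>b. b * [:- Rb, 1:]) bs)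
                   (phi L (s + 1) ` Mset \<alpha> rr n (s + 1) (l + 1)))"
proof -
  interpret reencoding \<alpha> rr n k
    using \<open>inj_on \<alpha> {..<n}\<close> \<open>k < n\<close> \<open>\<forall>i<k. r i = 0\<close>
    by unfold_locales (simp_all add: rr_def)
  show ?thesis
    unfolding Gb_def Rb_def G_def R_def L_def
    using weak_popov_basis_min_wdeg is_mod_basis_Suc_degree[OF \<open>s \<le> l\<close>]
      is_mod_basis_Suc_multiplicity
    by blast
qed

end
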